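(* Let $d\ge 1$, $0<\alpha\le 1$ and $M>1$. For the online hitting set problem in which the point set is $\mathbb{Z}^d$ and the objects are $\alpha$-fat objects in $\mathbb{R}^d$ with widths in the range $[1,M]$, the deterministic online algorithm $\mathrm{ANC}$ described below achieves a competitive ratio of at most $\lfloor \frac{2}{\alpha}+2\rfloor^d\left(\lfloor\log_2 M\rfloor+1\right)$.
   Context: Online hitting set problem: the point set is known in advance; objects arrive one by one; upon each arrival the algorithm must ensure its current solution (points can only be added, never removed) contains a point of every object presented so far. The competitive ratio is the supremum over input sequences of the size of the algorithm's solution divided by the minimum size of an offline hitting set of the sequence. An object is a compact subset of $\mathbb{R}^d$ with non-empty interior; $\partial\sigma$ is its boundary. All distances $d_\infty$ are $L_\infty$ distances. For $x\in\sigma$ let $\alpha(x)=\min_{y\in\partial\sigma}d_\infty(x,y)/\max_{y\in\partial\sigma}d_\infty(x,y)$ and $\alpha(\sigma)=\max_{x\in\sigma}\alpha(x)$; $\sigma$ is $\alpha$-fat if $\alpha(\sigma)\ge\alpha$. A center of $\sigma$ is a point $c\in\sigma$ with $\alpha(c)=\alpha(\sigma)$ (if several, one is fixed arbitrarily); the width of $\sigma$ is $\min_{y\in\partial\sigma}d_\infty(c,y)$. Algorithm $\mathrm{ANC}$: when an object $\sigma$ with center $c$ and width $w$ arrives, if it contains a point of the current solution do nothing. Otherwise let $i=\lfloor\log_2 w\rfloor$; for each $j\in[d]$ write uniquely $c(x_j)=z_j+f_j$ with $z_j\in 2^{i+1}\mathbb{Z}$ and $f_j\in[0,2^{i+1})$,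 and define the point $r$ by $r(x_j)=z_j$ if $f_j\in[0,2^i)$ and $r(x_j)=z_j+2^{i+1}$ if $f_j\in[2^i,2^{i+1})$; add $r$ (a point of $(2^{i+1}\mathbb{Z})^d\subseteq\mathbb{Z}^d$) to the solution. *)

theory Defs
  imports "HOL-Analysis.Analysis"
begin

text \<open>Points of R^d are vectors of type real ^ 'n, with d = CARD('n).\<close>

definition dinf :: "real^'n \<Rightarrow> real^'n \<Rightarrow> real" where
  "dinf x y = Max (range (\<lambda>i. \<bar>x$i - y$i\<bar>))"

definition Zd :: "(real^'n) set" where
  "Zd = {x. \<forall>i. x$i \<in> \<int>}"

definition is_object :: "(real^'n) set \<Rightarrow> bool" where
  "is_object \<sigma> \<longleftrightarrow> compact \<sigma> \<and> interior \<sigma> \<noteq> {}"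

definition alpha_pt :: "(real^'n) set \<Rightarrow> real^'n \<Rightarrow> real" where
  "alpha_pt \<sigma> x = (INF y\<in>frontier \<sigma>. dinf x y) / (SUP y\<in>frontier \<sigma>. dinf x y)"

definition alpha_obj :: "(real^'n) set \<Rightarrow> real" where
  "alpha_obj \<sigma> = (SUP x\<in>\<sigma>. alpha_pt \<sigma> x)"

definition fat :: "real \<Rightarrow> (real^'n) set \<Rightarrow> bool" where
  "fat \<alpha> \<sigma> \<longleftrightarrow> alpha_obj \<sigma> \<ge> \<alpha>"

definition valid_center :: "((real^'n) set \<Rightarrow> real^'n) \<Rightarrow> bool" where
  "valid_center cen \<longleftrightarrow> (\<forall>\<sigma>. is_object \<sigma> \<longrightarrow>
      cen \<sigma> \<in> \<sigma> \<and> alpha_pt \<sigma> (cen \<sigma>) = alpha_obj \<sigma>)"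

definition width :: "((real^'n) set \<Rightarrow> real^'n) \<Rightarrow> (real^'n) set \<Rightarrow> real" where
  "width cen \<sigma> = (INF y\<in>frontier \<sigma>. dinf (cen \<sigma>) y)"

definition anc_point :: "((real^'n) set \<Rightarrow> real^'n) \<Rightarrow> (real^'n) set \<Rightarrow> real^'n" where
  "anc_point cen \<sigma> =
    (let i = \<lfloor>log 2 (width cen \<sigma>)\<rfloor>;
         s = (2::real) powr (real_of_int i + 1);
         h = (2::real) powr (real_of_int i)
     in (\<chi> j. let z = s * real_of_int \<lfloor>(cen \<sigma>)$j / s\<rfloor>;
                 f = (cen \<sigma>)$j - z
             in if f < h then z else z + s))"

definition anc_step :: "((real^'n) set \<Rightarrow> real^'n) \<Rightarrow> (real^'n) set \<Rightarrow> (real^'n) set \<Rightarrow> (real^'n) set" where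
  "anc_step cen S \<sigma> = (if S \<inter> \<sigma> \<noteq> {} then S else insert (anc_point cen \<sigma>) S)"

definition anc :: "((real^'n) set \<Rightarrow> real^'n) \<Rightarrow> (real^'n) set list \<Rightarrow> (real^'n) set" where
  "anc cen \<sigma>s = foldl (anc_step cen) {} \<sigma>s"

definition hits :: "(real^'n) set \<Rightarrow> (real^'n) set list \<Rightarrow> bool" where
  "hits H \<sigma>s \<longleftrightarrow> (\<forall>\<sigma>\<in>set \<sigma>s. H \<inter> \<sigma> \<noteq> {})"

definition opt :: "(real^'n) set list \<Rightarrow> nat" where
  "opt \<sigma>s = (LEAST k. \<exists>H. finite H \<and> H \<subseteq> Zd \<and> hits H \<sigma>s \<and> card H = k)"

end

theory Submission
  imports Defs
begin

(*
  Let sigma be an object of width w with center c and let i = floor (log 2 w). The point r that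
  ANC adds for sigma lies on the grid (2^(i+1) Z)^d at L_inf-distance at most 2^i <= w from c,
  hence in sigma, since the L_inf-ball of radius w around c lies in sigma. Conversely,
  alpha-fatness puts all of sigma within distance w/alpha < 2^(i+1)/alpha of c. So if p is a point
  of an optimal hitting set lying in sigma, then r is a point of (2^(i+1) Z)^d at distance
  < 2^(i+1) (1/2 + 1/alpha) from p. For fixed p and i there are at most floor (2/alpha + 2)^d such
  grid points, and widths in [1, M] allow only the levels i = 0, ..., floor (log 2 M).
*)

lemma component_le_dinf: "\<bar>x$i - y$i\<bar> \<le> dinf x y"
  unfolding dinf_def by (rule Max_ge) auto

lemma dinf_le_iff: "dinf x y \<le> r \<longleftrightarrow> (\<forall>i. \<bar>x$i - y$i\<bar> \<le> r)"
  unfolding dinf_def by (subst Max_le_iff) auto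

lemma dinf_attained: "\<exists>i. dinf x y = \<bar>x$i - y$i\<bar>"
proof -
  have "dinf x y \<in> range (\<lambda>i. \<bar>x$i - y$i\<bar>)"
    unfolding dinf_def by (rule Max_in) auto
  then show ?thesis by auto
qed

lemma dinf_nonneg: "0 \<le> dinf x y"
  using component_le_dinf[of x _ y] abs_ge_zero order_trans by blast

lemma dinf_eq_0_iff: "dinf x y = 0 \<longleftrightarrow> x = y"
  using component_le_dinf[of x _ y] dinf_le_iff[of x y 0] by (auto simp: vec_eq_iff)

lemma dinf_le_norm: "dinf x y \<le> norm (x - y)"
  unfolding dinf_le_iff using component_le_norm_cart[of "x - y"] by simp

lemma dinf_along_ray: "dinf c (c + t *\<^sub>R (x - c)) = \<bar>t\<bar> * dinf c x"
proof (rule antisym)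
  show "dinf c (c + t *\<^sub>R (x - c)) \<le> \<bar>t\<bar> * dinf c x"
    unfolding dinf_le_iff
    using component_le_dinf[of c _ x] by (simp add: abs_mult abs_minus_commute mult_left_mono)
  obtain i where "dinf c x = \<bar>c$i - x$i\<bar>"
    using dinf_attained by blast
  then show "\<bar>t\<bar> * dinf c x \<le> dinf c (c + t *\<^sub>R (x - c))"
    using component_le_dinf[of c i "c + t *\<^sub>R (x - c)"] by (simp add: abs_mult abs_minus_commute)
qed

lemma bounded_imp_dinf_bounded:
  assumes "bounded S"
  obtains D where "\<And>y. y \<in> S \<Longrightarrow> dinf c y \<le> D"
proof -
  obtain B where B: "\<And>y. y \<in> S \<Longrightarrow> norm y \<le> B"
    using assms bounded_iff by blast
  have "dinf c y \<le> norm c + B" if "y \<in> S" for y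
    using dinf_le_norm[of c y] norm_triangle_ineq4[of c y] B[OF that] by linarith
  then show thesis by (rule that)
qed

lemma mem_if_dinf_le_Inf_frontier:
  fixes \<sigma> :: "(real^'n) set"
  assumes "closed \<sigma>" "c \<in> \<sigma>" "dinf c x \<le> (INF y\<in>frontier \<sigma>. dinf c y)"
  shows "x \<in> \<sigma>"
proof (rule ccontr)
  assume "x \<notin> \<sigma>"
  then have "closed_segment c x \<inter> frontier \<sigma> \<noteq> {}"
    using assms(2) by (intro connected_Int_frontier) auto
  then obtain u where u: "0 \<le> u" "u \<le> 1" and y: "(1 - u) *\<^sub>R c + u *\<^sub>R x \<in> frontier \<sigma>"
    by (auto simp: in_segment)
  have ray: "(1 - u) *\<^sub>R c + u *\<^sub>R x = c + u *\<^sub>R (x - c)"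
    by (simp add: algebra_simps)
  have "bdd_below ((\<lambda>y. dinf c y) ` frontier \<sigma>)"
    by (rule bdd_belowI2[where m=0]) (rule dinf_nonneg)
  then have "(INF y\<in>frontier \<sigma>. dinf c y) \<le> dinf c (c + u *\<^sub>R (x - c))"
    using y unfolding ray by (rule cINF_lower)
  then have "(INF y\<in>frontier \<sigma>. dinf c y) \<le> u * dinf c x"
    using dinf_along_ray[of c u x] u(1) by simp
  with assms(3) have "dinf c x \<le> u * dinf c x" by linarith
  moreover have "dinf c x > 0"
    using \<open>x \<notin> \<sigma>\<close> assms(2) dinf_nonneg[of c x] dinf_eq_0_iff[of c x] by auto
  ultimately have "u = 1" using u(2) by (simp add: mult_le_cancel_right1)
  then show False
    using y \<open>x \<notin> \<sigma>\<close> frontier_subset_closed[OF assms(1)] by auto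
qed

lemma dinf_le_Sup_frontier:
  fixes \<sigma> :: "(real^'n) set"
  assumes "compact \<sigma>" "c \<in> \<sigma>" "p \<in> \<sigma>" "p \<noteq> c"
  shows "dinf c p \<le> (SUP y\<in>frontier \<sigma>. dinf c y)"
proof -
  obtain D where D: "\<And>y. y \<in> \<sigma> \<Longrightarrow> dinf c y \<le> D"
    using bounded_imp_dinf_bounded compact_imp_bounded[OF assms(1)] by metis
  let ?ray = "\<lambda>t. c + t *\<^sub>R (p - c)"
  have pos: "dinf c p > 0"
    using assms(4) dinf_nonneg[of c p] dinf_eq_0_iff[of c p] by auto
  define t where "t = D / dinf c p + 1"
  have "D \<ge> 0" using D[OF assms(2)] dinf_nonneg[of c c] by linarith
  then have t: "1 \<le> t" unfolding t_def using pos by simp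
  have "dinf c (?ray t) = D + dinf c p"
    using dinf_along_ray[of c t p] t pos by (simp add: t_def field_simps)
  then have "?ray t \<notin> \<sigma>" using D pos by force
  moreover have "?ray t \<in> ?ray ` {1..t}" "p \<in> ?ray ` {1..t}"
    using t by (auto intro!: image_eqI[of p _ 1])
  moreover have "connected (?ray ` {1..t})"
    by (intro connected_continuous_image continuous_intros) auto
  ultimately have "?ray ` {1..t} \<inter> frontier \<sigma> \<noteq> {}"
    using assms(3) connected_Int_frontier by blast
  then obtain s where s: "1 \<le> s" "?ray s \<in> frontier \<sigma>" by auto
  have frontier: "frontier \<sigma> \<subseteq> \<sigma>"
    by (rule frontier_subset_closed[OF compact_imp_closed[OF assms(1)]])
  have "dinf c p \<le> dinf c (?ray s)"
    using dinf_along_ray[of c s p] s(1) pos by simp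
  also have "\<dots> \<le> (SUP y\<in>frontier \<sigma>. dinf c y)"
    using D frontier by (intro cSUP_upper[OF s(2)] bdd_aboveI2) auto
  finally show ?thesis .
qed

lemma dinf_center_le_width_div:
  assumes "valid_center cen" "is_object \<sigma>" "fat \<alpha> \<sigma>" "0 < \<alpha>" "0 < width cen \<sigma>" "p \<in> \<sigma>"
  shows "dinf (cen \<sigma>) p \<le> width cen \<sigma> / \<alpha>"
proof (cases "p = cen \<sigma>")
  case True
  then show ?thesis using assms(4,5) dinf_eq_0_iff[of p p] by simp
next
  case False
  define S where "S = (SUP y\<in>frontier \<sigma>. dinf (cen \<sigma>) y)"
  have c: "cen \<sigma> \<in> \<sigma>" "alpha_pt \<sigma> (cen \<sigma>) = alpha_obj \<sigma>"
    using assms(1,2) unfolding valid_center_def by auto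
  have "\<alpha> \<le> width cen \<sigma> / S"
    using assms(3) c(2) unfolding fat_def alpha_pt_def width_def S_def by simp
  with assms(4,5) have "S > 0"
    by (smt (verit) divide_nonneg_nonpos)
  with \<open>\<alpha> \<le> width cen \<sigma> / S\<close> assms(4) have "S \<le> width cen \<sigma> / \<alpha>"
    by (simp add: field_simps)
  moreover have "dinf (cen \<sigma>) p \<le> S"
    unfolding S_def using assms(2,6) c(1) False by (intro dinf_le_Sup_frontier) (auto simp: is_object_def)
  ultimately show ?thesis by linarith
qed

definition grid_round :: "real \<Rightarrow> real \<Rightarrow> real" where
  "grid_round s x = (let z = s * real_of_int \<lfloor>x / s\<rfloor> in if x - z < s / 2 then z else z + s)"

lemma grid_round_in_grid: "\<exists>k::int. grid_round s x = s * k"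
  unfolding grid_round_def Let_def
  by (metis (no_types) distrib_left mult.right_neutral of_int_add of_int_1)

lemma abs_grid_round_diff_le:
  assumes "0 < s"
  shows "\<bar>grid_round s x - x\<bar> \<le> s / 2"
proof -
  have "s * real_of_int \<lfloor>x / s\<rfloor> \<le> x" "x < s * real_of_int \<lfloor>x / s\<rfloor> + s"
    using assms floor_divide_lower[OF assms, of x] floor_divide_upper[OF assms, of x]
    by (simp_all add: algebra_simps)
  then show ?thesis unfolding grid_round_def Let_def by auto
qed

definition anc_grid_step :: "((real^'n) set \<Rightarrow> real^'n) \<Rightarrow> (real^'n) set \<Rightarrow> real" where
  "anc_grid_step cen \<sigma> = 2 powr (real_of_int \<lfloor>log 2 (width cen \<sigma>)\<rfloor> + 1)"

lemma anc_point_eq_grid_round: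
  "anc_point cen \<sigma> = (\<chi> j. grid_round (anc_grid_step cen \<sigma>) (cen \<sigma> $ j))"
  unfolding anc_point_def anc_grid_step_def grid_round_def Let_def by (simp add: powr_add)

lemma anc_grid_step_bounds:
  assumes "0 < width cen \<sigma>"
  shows "anc_grid_step cen \<sigma> / 2 \<le> width cen \<sigma>" "width cen \<sigma> < anc_grid_step cen \<sigma>"
  using floor_log_eq_powr_iff[OF assms, of 2 "\<lfloor>log 2 (width cen \<sigma>)\<rfloor>"]
  unfolding anc_grid_step_def by (simp_all add: powr_add)

lemma anc_point_in_object:
  assumes "valid_center cen" "is_object \<sigma>" "0 < width cen \<sigma>"
  shows "anc_point cen \<sigma> \<in> \<sigma>"
proof (rule mem_if_dinf_le_Inf_frontier)
  show "closed \<sigma>" "cen \<sigma> \<in> \<sigma>"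
    using assms(1,2) by (auto simp: valid_center_def is_object_def compact_imp_closed)
  have "\<bar>grid_round (anc_grid_step cen \<sigma>) x - x\<bar> \<le> width cen \<sigma>" for x
    using abs_grid_round_diff_le[of "anc_grid_step cen \<sigma>" x] anc_grid_step_bounds[OF assms(3)]
    by linarith
  then show "dinf (cen \<sigma>) (anc_point cen \<sigma>) \<le> (INF y\<in>frontier \<sigma>. dinf (cen \<sigma>) y)"
    unfolding width_def[symmetric] dinf_le_iff anc_point_eq_grid_round
    by (simp add: abs_minus_commute)
qed

lemma anc_point_in_Zd:
  assumes "1 \<le> width cen \<sigma>"
  shows "anc_point cen \<sigma> \<in> Zd"
proof -
  have "0 \<le> \<lfloor>log 2 (width cen \<sigma>)\<rfloor>" using assms by simp
  then have "anc_grid_step cen \<sigma> = 2 ^ nat (\<lfloor>log 2 (width cen \<sigma>)\<rfloor> + 1)"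
    unfolding anc_grid_step_def by (simp add: powr_realpow[symmetric])
  then have "anc_grid_step cen \<sigma> \<in> \<int>" by simp
  then have "grid_round (anc_grid_step cen \<sigma>) x \<in> \<int>" for x
    using grid_round_in_grid[of "anc_grid_step cen \<sigma>" x] by (auto intro: Ints_mult)
  then show ?thesis
    unfolding Zd_def anc_point_eq_grid_round by simp
qed

definition lattice_box :: "real \<Rightarrow> real^'n \<Rightarrow> real \<Rightarrow> (real^'n) set" where
  "lattice_box s p \<rho> = {r. \<forall>j. (\<exists>k::int. r$j = s * k) \<and> \<bar>r$j - p$j\<bar> < \<rho>}"

lemma anc_point_in_lattice_box:
  assumes "valid_center cen" "is_object \<sigma>" "fat \<alpha> \<sigma>" "0 < \<alpha>" "0 < width cen \<sigma>" "p \<in> \<sigma>"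
  shows "anc_point cen \<sigma> \<in> lattice_box (anc_grid_step cen \<sigma>) p (anc_grid_step cen \<sigma> * (1/2 + 1/\<alpha>))"
  unfolding lattice_box_def
proof (intro CollectI allI conjI)
  fix j
  let ?s = "anc_grid_step cen \<sigma>" and ?c = "cen \<sigma> $ j"
  show "\<exists>k::int. anc_point cen \<sigma> $ j = ?s * k"
    unfolding anc_point_eq_grid_round by (simp add: grid_round_in_grid)
  have "\<bar>?c - p$j\<bar> \<le> dinf (cen \<sigma>) p"
    by (rule component_le_dinf)
  also have "\<dots> \<le> width cen \<sigma> / \<alpha>"
    by (rule dinf_center_le_width_div[OF assms])
  also have "\<dots> < ?s / \<alpha>"
    by (intro divide_strict_right_mono anc_grid_step_bounds(2) assms(4,5))
  finally have "\<bar>?c - p$j\<bar> < ?s / \<alpha>" .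
  moreover have "\<bar>grid_round ?s ?c - ?c\<bar> \<le> ?s / 2"
    using anc_grid_step_bounds[OF assms(5)] by (intro abs_grid_round_diff_le) linarith
  moreover have "?s * (1/2 + 1/\<alpha>) = ?s / 2 + ?s / \<alpha>"
    by (simp add: distrib_left)
  ultimately show "\<bar>anc_point cen \<sigma> $ j - p$j\<bar> < ?s * (1/2 + 1/\<alpha>)"
    unfolding anc_point_eq_grid_round
    using abs_triangle_ineq[of "grid_round ?s ?c - ?c" "?c - p$j"] by simp
qed

lemma anc_grid_step_mem_levels:
  assumes "1 \<le> width cen \<sigma>" "width cen \<sigma> \<le> M"
  shows "anc_grid_step cen \<sigma> \<in> (\<lambda>i. 2 powr (real_of_int i + 1)) ` {0..\<lfloor>log 2 M\<rfloor>}"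
  using assms unfolding anc_grid_step_def by (intro imageI) (simp add: floor_mono)

lemma int_between_subset:
  fixes a b :: real
  shows "{k::int. a < k \<and> k < b} \<subseteq> {\<lfloor>a\<rfloor> + 1 .. \<lfloor>a\<rfloor> + \<lfloor>b - a\<rfloor> + 1}"
proof (intro subsetI CollectI, elim CollectE conjE)
  fix k :: int
  assume k: "a < k" "k < b"
  then have "\<lfloor>a\<rfloor> < k" by (simp add: floor_less_iff)
  moreover have "real_of_int (k - \<lfloor>a\<rfloor> - 1) \<le> b - a"
    using k(2) by linarith
  then have "k - \<lfloor>a\<rfloor> - 1 \<le> \<lfloor>b - a\<rfloor>" by (simp only: le_floor_iff)
  ultimately show "k \<in> {\<lfloor>a\<rfloor> + 1 .. \<lfloor>a\<rfloor> + \<lfloor>b - a\<rfloor> + 1}" by simp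
qed

lemma finite_int_between:
  fixes a b :: real
  shows "finite {k::int. a < k \<and> k < b}"
  using finite_subset[OF int_between_subset finite_atLeastAtMost_int] .

lemma card_int_between_le:
  fixes a b :: real
  shows "card {k::int. a < k \<and> k < b} \<le> nat (\<lfloor>b - a\<rfloor> + 1)"
  using card_mono[OF finite_atLeastAtMost_int int_between_subset] by simp

lemma lattice_box_subset_image_PiE:
  assumes "0 < s"
  shows "lattice_box s p (s * t)
    \<subseteq> (\<lambda>f. \<chi> j. s * real_of_int (f j)) ` PiE UNIV (\<lambda>j. {k. p$j / s - t < k \<and> k < p$j / s + t})"
proof
  fix r assume "r \<in> lattice_box s p (s * t)"
  then have "\<forall>j. \<exists>k::int. r$j = s * k \<and> \<bar>r$j - p$j\<bar> < s * t"
    unfolding lattice_box_def by simp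
  from choice[OF this] obtain f :: "'a \<Rightarrow> int"
    where f: "\<forall>j. r$j = s * f j \<and> \<bar>r$j - p$j\<bar> < s * t" ..
  have "p$j / s - t < f j \<and> f j < p$j / s + t" for j
    using spec[OF f, of j] assms by (simp add: abs_less_iff field_simps)
  moreover have "r = (\<chi> j. s * real_of_int (f j))"
    using f by (simp add: vec_eq_iff)
  ultimately show "r \<in> (\<lambda>f. \<chi> j. s * real_of_int (f j)) ` PiE UNIV (\<lambda>j. {k. p$j / s - t < k \<and> k < p$j / s + t})"
    by auto
qed

lemma finite_lattice_box:
  assumes "0 < s"
  shows "finite (lattice_box s p (s * t))"
  by (rule finite_subset[OF lattice_box_subset_image_PiE[OF assms]])
    (auto intro!: finite_PiE finite_int_between)

lemma card_lattice_box_le: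
  fixes p :: "real^'n"
  assumes "0 < s"
  shows "card (lattice_box s p (s * t)) \<le> nat \<lfloor>2 * t + 1\<rfloor> ^ CARD('n)"
proof -
  let ?I = "\<lambda>j. {k::int. p$j / s - t < k \<and> k < p$j / s + t}"
  have "card (lattice_box s p (s * t)) \<le> card ((\<lambda>f. \<chi> j. s * real_of_int (f j)) ` PiE UNIV ?I)"
    by (auto intro!: card_mono lattice_box_subset_image_PiE assms finite_PiE
        finite_int_between)
  also have "\<dots> \<le> card (PiE UNIV ?I)"
    by (auto intro!: card_image_le finite_PiE finite_int_between)
  also have "\<dots> = (\<Prod>j\<in>UNIV. card (?I j))"
    by (simp add: card_PiE)
  also have "\<dots> \<le> (\<Prod>j\<in>(UNIV::'n set). nat \<lfloor>2 * t + 1\<rfloor>)"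
  proof (intro prod_mono conjI)
    fix j
    have "card (?I j) \<le> nat (\<lfloor>(p$j / s + t) - (p$j / s - t)\<rfloor> + 1)"
      by (rule card_int_between_le)
    also have "(p$j / s + t) - (p$j / s - t) = 2 * t" by simp
    also have "\<lfloor>2 * t\<rfloor> + 1 = \<lfloor>2 * t + 1\<rfloor>" by simp
    finally show "card (?I j) \<le> nat \<lfloor>2 * t + 1\<rfloor>" .
  qed simp
  finally show ?thesis by simp
qed

lemma anc_subset_anc_points: "anc cen \<sigma>s \<subseteq> anc_point cen ` set \<sigma>s"
proof -
  have "foldl (anc_step cen) S \<sigma>s \<subseteq> S \<union> anc_point cen ` set \<sigma>s" for S
  proof (induction \<sigma>s arbitrary: S)
    case (Cons \<sigma> \<sigma>s)
    have "anc_step cen S \<sigma> \<subseteq> S \<union> {anc_point cen \<sigma>}"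
      by (auto simp: anc_step_def)
    then show ?case using Cons.IH[of "anc_step cen S \<sigma>"] by auto
  qed simp
  then show ?thesis unfolding anc_def by fastforce
qed

lemma opt_attained:
  assumes "finite H\<^sub>0" "H\<^sub>0 \<subseteq> Zd" "hits H\<^sub>0 \<sigma>s"
  obtains H where "finite H" "H \<subseteq> Zd" "hits H \<sigma>s" "card H = opt \<sigma>s"
  using LeastI_ex[of "\<lambda>k. \<exists>H. finite H \<and> H \<subseteq> Zd \<and> hits H \<sigma>s \<and> card H = k"] assms
  unfolding opt_def by blast

lemma anc_subset_lattice_boxes:
  assumes "valid_center cen" "0 < \<alpha>" "hits H \<sigma>s"
    and "\<forall>\<sigma>\<in>set \<sigma>s. is_object \<sigma> \<and> fat \<alpha> \<sigma> \<and> 1 \<le> width cen \<sigma> \<and> width cen \<sigma> \<le> M"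
  shows "anc cen \<sigma>s \<subseteq> (\<Union>p\<in>H. \<Union>s\<in>(\<lambda>i. 2 powr (real_of_int i + 1)) ` {0..\<lfloor>log 2 M\<rfloor>}.
                          lattice_box s p (s * (1/2 + 1/\<alpha>)))"
proof
  fix r assume "r \<in> anc cen \<sigma>s"
  then obtain \<sigma> where \<sigma>: "\<sigma> \<in> set \<sigma>s" and r: "r = anc_point cen \<sigma>"
    using anc_subset_anc_points by blast
  obtain p where "p \<in> H" "p \<in> \<sigma>"
    using assms(3) \<sigma> unfolding hits_def by blast
  then show "r \<in> (\<Union>p\<in>H. \<Union>s\<in>(\<lambda>i. 2 powr (real_of_int i + 1)) ` {0..\<lfloor>log 2 M\<rfloor>}.
                    lattice_box s p (s * (1/2 + 1/\<alpha>)))"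
    using anc_point_in_lattice_box[OF assms(1) _ _ assms(2)] anc_grid_step_mem_levels assms(4) \<sigma>
    unfolding r by fastforce
qed

lemma card_anc_le_card_hitting_set:
  fixes cen :: "(real^'n) set \<Rightarrow> real^'n"
  assumes "valid_center cen" "0 < \<alpha>" "finite H" "hits H \<sigma>s"
    and "\<forall>\<sigma>\<in>set \<sigma>s. is_object \<sigma> \<and> fat \<alpha> \<sigma> \<and> 1 \<le> width cen \<sigma> \<and> width cen \<sigma> \<le> M"
  shows "card (anc cen \<sigma>s) \<le> card H * (nat (\<lfloor>log 2 M\<rfloor> + 1) * nat \<lfloor>2 / \<alpha> + 2\<rfloor> ^ CARD('n))"
proof -
  let ?K = "\<lfloor>2 / \<alpha> + 2\<rfloor>" and ?m = "\<lfloor>log 2 M\<rfloor>"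
  let ?levels = "(\<lambda>i. 2 powr (real_of_int i + 1)) ` {0..?m}"
  let ?box = "\<lambda>p s. lattice_box s p (s * (1/2 + 1/\<alpha>)) :: (real^'n) set"
  have box: "finite (?box p s) \<and> card (?box p s) \<le> nat ?K ^ CARD('n)" if "s \<in> ?levels" for p s
  proof
    have "0 < s" using that by auto
    then show "finite (?box p s)" by (rule finite_lattice_box)
    have K: "2 * (1/2 + 1/\<alpha>) + 1 = 2 / \<alpha> + 2" by simp
    show "card (?box p s) \<le> nat ?K ^ CARD('n)"
      using card_lattice_box_le[OF \<open>0 < s\<close>, of p "1/2 + 1/\<alpha>"] unfolding K .
  qed
  have "card (anc cen \<sigma>s) \<le> card (\<Union>p\<in>H. \<Union>s\<in>?levels. ?box p s)"
    using anc_subset_lattice_boxes[OF assms(1,2,4,5)] assms(3) box by (intro card_mono) auto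
  also have "\<dots> \<le> (\<Sum>p\<in>H. \<Sum>s\<in>?levels. card (?box p s))"
    using assms(3) by (intro card_UN_le[THEN order_trans] sum_mono card_UN_le) auto
  also have "\<dots> \<le> (\<Sum>p\<in>H. \<Sum>s\<in>?levels. nat ?K ^ CARD('n))"
    using box by (intro sum_mono) auto
  also have "\<dots> \<le> card H * (nat (?m + 1) * nat ?K ^ CARD('n))"
    using card_image_le[of "{0..?m}" "\<lambda>i. 2 powr (real_of_int i + 1)"] by simp
  finally show ?thesis .
qed

theorem theorem3:
  fixes \<alpha> M :: real
    and cen :: "(real^'n) set \<Rightarrow> real^'n"
    and \<sigma>s :: "(real^'n) set list"
  assumes "0 < \<alpha>" and "\<alpha> \<le> 1" and "M > 1"
    and "valid_center cen"
    and "\<forall>\<sigma>\<in>set \<sigma>s. is_object \<sigma> \<and> fat \<alpha> \<sigma> \<and> 1 \<le> width cen \<sigma> \<and> width cen \<sigma> \<le> M"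
  shows "real (card (anc cen \<sigma>s))
           \<le> real_of_int (\<lfloor>2 / \<alpha> + 2\<rfloor> ^ CARD('n) * (\<lfloor>log 2 M\<rfloor> + 1)) * real (opt \<sigma>s)"
proof -
  have "anc_point cen ` set \<sigma>s \<subseteq> Zd" "hits (anc_point cen ` set \<sigma>s) \<sigma>s"
    using anc_point_in_Zd anc_point_in_object[OF assms(4)] assms(5) unfolding hits_def by fastforce+
  then obtain H where H: "finite H" "H \<subseteq> Zd" "hits H \<sigma>s" "card H = opt \<sigma>s"
    by (rule opt_attained[OF finite_imageI[OF finite_set]])
  have "card (anc cen \<sigma>s) \<le> opt \<sigma>s * (nat (\<lfloor>log 2 M\<rfloor> + 1) * nat \<lfloor>2 / \<alpha> + 2\<rfloor> ^ CARD('n))"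
    using card_anc_le_card_hitting_set[OF assms(4,1) H(1,3) assms(5)] unfolding H(4) .
  then have "real (card (anc cen \<sigma>s))
      \<le> real (opt \<sigma>s * (nat (\<lfloor>log 2 M\<rfloor> + 1) * nat \<lfloor>2 / \<alpha> + 2\<rfloor> ^ CARD('n)))"
    by (simp only: of_nat_le_iff)
  then show ?thesis
    using assms(1,3) by (simp add: mult_ac)
qed

end
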